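(* Let $k\ge2$ and $t\ge1$ be integers. Let $K$ be the number of inner blocks of $0$s of length at least two in the binary expansion of $t$, and $L$ the number of maximal blocks of $1$s of length $\le k$ in the binary expansion of $t$. Then \[m(t)\ge 4+K+\max\Bigl(0,\Bigl\lfloor\frac{L-2K-1}{2}\Bigr\rfloor\Bigr)\frac{k}{2^k}.\] In particular, for all integers $D_0\ge2$ and $k\ge2$ there exists a bound $B=B(D_0,k)$ such that for all integers $t\ge1$ with $D(t)\le D_0$, the number of inner blocks of $0$s of length $\ge2$ in $t$ and the number of maximal blocks of $1$s of length $\le k$ in $t$ are both bounded by $B$.
   Context: $s(n)$ is the number of $1$s in the binary expansion of $n\ge0$; $\delta(j,t)=\lim_{N\to\infty}\frac1N|\{0\le n<N: s(n+t)-s(n)=j\}|$ for $j\in\mathbb Z$, a probability distribution on $\mathbb Z$, and $\kappa_j(t)$ denotes its $j$-th cumulant ($\log\sum_k\delta(k,t)e^{2\pi ik\vartheta}=\sum_{j\ge0}\frac{\kappa_j(t)}{j!}(2\pi i\vartheta)^j$ near $\vartheta=0$). Set $D(t)=\kappa_2(t)-\kappa_3(t)/3$ and $m(t)=\min(D(t),D(t+1))$. A maximal block of $1$s is a maximal run of consecutive binary digits equal to $1$; its length is the number of digits. An inner block of $0$s is a maximal run of consecutive binary digits equal to $0$ that is bordered by a digit $1$ on both sides (so trailing zeros at the least significant end are not inner blocks). *)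

theory Defs
  imports "HOL-Analysis.Analysis"
begin

fun bsum :: "nat \<Rightarrow> nat" where
  "bsum n = (if n = 0 then 0 else n mod 2 + bsum (n div 2))"

declare bsum.simps[simp del]

definition delta :: "int \<Rightarrow> nat \<Rightarrow> real" where
  "delta j t = lim (\<lambda>N::nat. real (card {n \<in> {..<N}. int (bsum (n + t)) - int (bsum n) = j}) / real N)"

definition charf :: "nat \<Rightarrow> complex \<Rightarrow> complex" where
  "charf t \<theta> = infsum (\<lambda>k::int. complex_of_real (delta k t) * exp (2 * of_real pi * \<i> * of_int k * \<theta>)) UNIV"

text \<open>j-th cumulant: log charf t theta = sum_j kappa_j/j! (2 pi i theta)^j near 0,
  i.e. kappa_j = (d/dtheta)^j log charf t (0) / (2 pi i)^j.\<close>
definition cumulant :: "nat \<Rightarrow> nat \<Rightarrow> real" where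
  "cumulant j t = Re (((deriv ^^ j) (\<lambda>\<theta>. Ln (charf t \<theta>)) 0) / (2 * of_real pi * \<i>) ^ j)"

definition Dfun :: "nat \<Rightarrow> real" where
  "Dfun t = cumulant 2 t - cumulant 3 t / 3"

definition mfun :: "nat \<Rightarrow> real" where
  "mfun t = min (Dfun t) (Dfun (t + 1))"

text \<open>Maximal blocks of 1s, as pairs (a,b) of digit positions a..b (LSB = position 0).\<close>
definition one_blocks :: "nat \<Rightarrow> (nat \<times> nat) set" where
  "one_blocks t = {(a, b). a \<le> b \<and> (\<forall>i\<in>{a..b}. bit t i) \<and> (a = 0 \<or> \<not> bit t (a - 1)) \<and> \<not> bit t (Suc b)}"

definition inner_zero_blocks :: "nat \<Rightarrow> (nat \<times> nat) set" where
  "inner_zero_blocks t = {(a, b). 0 < a \<and> a \<le> b \<and> (\<forall>i\<in>{a..b}. \<not> bit t i) \<and> bit t (a - 1) \<and> bit t (Suc b)}"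

definition Kcount :: "nat \<Rightarrow> nat" where
  "Kcount t = card {(a, b) \<in> inner_zero_blocks t. b - a + 1 \<ge> 2}"

definition Lcount :: "nat \<Rightarrow> nat \<Rightarrow> nat" where
  "Lcount k t = card {(a, b) \<in> one_blocks t. b - a + 1 \<le> k}"

end

theory Submission
  imports Defs "HOL-Complex_Analysis.Complex_Analysis"
begin

(* The densities satisfy delta(j, 2t) = delta(j, t) and
   delta(j, 2t+1) = (delta(j-1, t) + delta(j+1, t+1)) / 2, so near 0 the characteristic functions
   satisfy chi(2t+1)(theta) = (e(theta) chi(t)(theta) + e(-theta) chi(t+1)(theta)) / 2 with
   e(theta) = exp(2 pi i theta).  All these distributions are centred, so kappa_2 and kappa_3 are read
   off the second and third derivatives of chi(t) at 0, and differentiating the functional equation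
   gives D(2t) = D(t) and D(2t+1) = D(t+1) + g(t), where g(t) and w(t) = kappa_2(t) - kappa_2(t+1)
   obey affine recursions.  Building t digit by digit from its most significant end, an invariant on
   D(t), D(t+1), w(t) and g(t), split according to whether t ends in 1, 10 or 00, shows
   m(t) >= 4 + K + c (L - K - 1) whenever c <= l / 2^l for 1 <= l <= k: every inner block of zeros of
   length at least two contributes 1, and every block of l <= k ones contributes at least l / 2^l.
   Taking c = k / 2^k and c = 0 gives the bound; since D(t) >= m(t), an upper bound on D(t) bounds
   first K and then L. *)

section \<open>Digit sums and the densities delta\<close>

lemma binary_induct [case_names zero one double Suc_double]:
  assumes "P 0" "P 1"
    and "\<And>u. 1 \<le> u \<Longrightarrow> P u \<Longrightarrow> P (2 * u)"
    and "\<And>u. 1 \<le> u \<Longrightarrow> P u \<Longrightarrow> P (Suc u) \<Longrightarrow> P (Suc (2 * u))"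
  shows "P t"
proof (induction t rule: less_induct)
  case (less t)
  show ?case
  proof (cases "t \<le> 1")
    case True
    then show ?thesis using assms(1,2) by (auto simp: le_Suc_eq)
  next
    case False
    define u where "u = t div 2"
    have "1 \<le> u" "t = 2 * u \<or> t = Suc (2 * u)"
      using False unfolding u_def by presburger+
    then show ?thesis using assms(3,4) less by auto
  qed
qed

lemma bsum_0 [simp]: "bsum 0 = 0"
  by (simp add: bsum.simps)

lemma bsum_double [simp]: "bsum (2 * m) = bsum m"
  by (subst bsum.simps) auto

lemma bsum_Suc_double [simp]: "bsum (Suc (2 * m)) = Suc (bsum m)"
  by (subst bsum.simps) auto

lemma bsum_Suc_le: "bsum (Suc n) \<le> Suc (bsum n)"
proof (induction n rule: less_induct)
  case (less n)
  show ?case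
  proof (cases "even n")
    case True
    then show ?thesis by (auto elim: evenE)
  next
    case False
    then obtain m where n: "n = Suc (2 * m)" by (auto elim: oddE)
    have "Suc n = 2 * Suc m" using n by simp
    then have "bsum (Suc n) = bsum (Suc m)" by (simp only: bsum_double)
    then show ?thesis using less[of m] n by simp
  qed
qed

definition diff_count :: "nat \<Rightarrow> int \<Rightarrow> nat \<Rightarrow> nat" where
  "diff_count N j t = card {n \<in> {..<N}. int (bsum (n + t)) - int (bsum n) = j}"

lemma card_lessThan_filter_parity:
  "card {n \<in> {..<N}. P n} =
     card {m \<in> {..<(N + 1) div 2}. P (2 * m)} + card {m \<in> {..<N div 2}. P (Suc (2 * m))}"
proof -
  let ?E = "(*) 2 ` {m \<in> {..<(N + 1) div 2}. P (2 * m)}"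
  let ?O = "(\<lambda>m. Suc (2 * m)) ` {m \<in> {..<N div 2}. P (Suc (2 * m))}"
  have "{n \<in> {..<N}. P n} = ?E \<union> ?O"
  proof (intro equalityI subsetI)
    fix n assume "n \<in> {n \<in> {..<N}. P n}"
    then show "n \<in> ?E \<union> ?O"
      by (cases "even n") (auto elim!: evenE oddE)
  qed auto
  moreover have "(*) 2 ` A \<inter> (\<lambda>m. Suc (2 * m)) ` B = {}" for A B :: "nat set"
    by (auto, presburger)
  ultimately show ?thesis
    by (simp add: card_Un_disjoint card_image inj_on_def)
qed

lemma diff_count_double: "diff_count N j (2 * u) = diff_count ((N + 1) div 2) j u + diff_count (N div 2) j u"
proof -
  have "2 * m + 2 * u = 2 * (m + u)" "Suc (2 * m) + 2 * u = Suc (2 * (m + u))" for m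
    by simp_all
  then show ?thesis
    unfolding diff_count_def by (subst card_lessThan_filter_parity) (simp only: bsum_double bsum_Suc_double, simp)
qed

lemma diff_count_Suc_double:
  "diff_count N j (Suc (2 * u)) = diff_count ((N + 1) div 2) (j - 1) u + diff_count (N div 2) (j + 1) (Suc u)"
proof -
  have "2 * m + Suc (2 * u) = Suc (2 * (m + u))" "Suc (2 * m) + Suc (2 * u) = 2 * (m + Suc u)" for m
    by simp_all
  then show ?thesis
    unfolding diff_count_def
    by (subst card_lessThan_filter_parity) (simp only: bsum_double bsum_Suc_double, simp add: algebra_simps)
qed

lemma tendsto_ratio_half:
  fixes g :: "nat \<Rightarrow> nat"
  assumes g: "\<And>N. 2 * g N \<le> N + 1" "\<And>N. N \<le> 2 * g N + 1"
  shows "(\<lambda>N. real (g N) / real N) \<longlonglongrightarrow> 1 / 2"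
proof -
  have "(\<lambda>N. real (g N) / real N - 1 / 2) \<longlonglongrightarrow> 0"
  proof (rule Lim_null_comparison)
    show "\<forall>\<^sub>F N in sequentially. norm (real (g N) / real N - 1 / 2) \<le> (1 / 2) / real N"
      using eventually_gt_at_top[of 0]
    proof eventually_elim
      case (elim N)
      have "\<bar>2 * real (g N) - real N\<bar> \<le> 1"
        using g[of N] by linarith
      with elim show ?case
        by (simp add: field_simps abs_le_iff)
    qed
  qed (rule lim_const_over_n)
  then show ?thesis
    by (rule LIM_zero_cancel)
qed

lemma tendsto_density_compose_half:
  fixes a g :: "nat \<Rightarrow> nat"
  assumes a: "(\<lambda>N. real (a N) / real N) \<longlonglongrightarrow> A"
    and g: "\<And>N. 2 * g N \<le> N + 1" "\<And>N. N \<le> 2 * g N + 1"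
  shows "(\<lambda>N. real (a (g N)) / real N) \<longlonglongrightarrow> A / 2"
proof -
  have "filterlim g at_top sequentially"
    unfolding filterlim_at_top
  proof
    fix Z
    show "\<forall>\<^sub>F N in sequentially. Z \<le> g N"
      using eventually_ge_at_top[of "2 * Z + 1"]
    proof eventually_elim
      case (elim N)
      then show ?case using g(2)[of N] by linarith
    qed
  qed
  then have "(\<lambda>N. real (a (g N)) / real (g N) * (real (g N) / real N)) \<longlonglongrightarrow> A * (1 / 2)"
    by (intro tendsto_mult tendsto_ratio_half g filterlim_compose[OF a, unfolded o_def])
  moreover have "\<forall>\<^sub>F N in sequentially. real (a (g N)) / real (g N) * (real (g N) / real N) = real (a (g N)) / real N"
    using eventually_ge_at_top[of 2]
  proof eventually_elim
    case (elim N)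
    then have "g N \<noteq> 0" using g(2)[of N] by auto
    then show ?case by simp
  qed
  ultimately show ?thesis
    by (auto intro: Lim_transform_eventually)
qed

lemma tendsto_density_halves:
  fixes a b :: "nat \<Rightarrow> nat"
  assumes "(\<lambda>N. real (a N) / real N) \<longlonglongrightarrow> A" "(\<lambda>N. real (b N) / real N) \<longlonglongrightarrow> B"
  shows "(\<lambda>N. real (a ((N + 1) div 2) + b (N div 2)) / real N) \<longlonglongrightarrow> A / 2 + B / 2"
  unfolding of_nat_add add_divide_distrib
  by (intro tendsto_add tendsto_density_compose_half assms) auto

lemma diff_count_zero: "diff_count N j 0 = (if j = 0 then N else 0)"
  unfolding diff_count_def by auto

lemma density_diff_count_zero: "(\<lambda>N. real (diff_count N j 0) / real N) \<longlonglongrightarrow> (if j = 0 then 1 else 0)"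
proof (rule Lim_transform_eventually[OF tendsto_const])
  show "\<forall>\<^sub>F N in sequentially. (if j = 0 then 1 else 0) = real (diff_count N j 0) / real N"
    using eventually_gt_at_top[of 0] by eventually_elim (simp add: diff_count_zero)
qed

lemma diff_count_one_eq_0:
  assumes "1 < j"
  shows "diff_count N j 1 = 0"
proof -
  have "int (bsum (n + 1)) - int (bsum n) < j" for n
    using bsum_Suc_le[of n] assms by simp
  then have "{n \<in> {..<N}. int (bsum (n + 1)) - int (bsum n) = j} = {}"
    by (auto simp: less_le)
  then show ?thesis
    unfolding diff_count_def by (simp only: card.empty)
qed

lemma density_diff_count_one:
  "(\<lambda>N. real (diff_count N j 1) / real N) \<longlonglongrightarrow> (if j \<le> 1 then (1 / 2) ^ nat (2 - j) else 0)"
proof (cases "j \<le> 1")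
  case False
  then have "diff_count N j 1 = 0" for N
    by (intro diff_count_one_eq_0) simp
  with False show ?thesis by simp
next
  case True
  have step: "diff_count N i 1 = diff_count ((N + 1) div 2) (i - 1) 0 + diff_count (N div 2) (i + 1) 1" for N i
    using diff_count_Suc_double[of N i 0] by simp
  define m where "m = nat (1 - j)"
  have "j = 1 - int m"
    using True by (simp add: m_def)
  then show ?thesis
  proof (induction m arbitrary: j)
    case 0
    have "(\<lambda>N. real (diff_count ((N + 1) div 2) 0 0 + diff_count (N div 2) 2 1) / real N) \<longlonglongrightarrow> 1 / 2 + 0 / 2"
      by (intro tendsto_density_halves) (use density_diff_count_zero[of 0] diff_count_one_eq_0 in auto)
    then show ?case
      unfolding step[of _ j] using 0 by simp
  next
    case (Suc m)
    have IH: "(\<lambda>N. real (diff_count N (j + 1) 1) / real N) \<longlonglongrightarrow> (1 / 2) ^ nat (2 - (j + 1))"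
      using Suc.IH[of "j + 1"] Suc.prems by simp
    have zero: "(\<lambda>N. real (diff_count N (j - 1) 0) / real N) \<longlonglongrightarrow> 0"
      using density_diff_count_zero[of "j - 1"] Suc.prems by simp
    have "nat (2 - j) = Suc (nat (2 - (j + 1)))"
      using Suc.prems by simp
    with tendsto_density_halves[OF zero IH] Suc.prems show ?case
      unfolding step[of _ j] by simp
  qed
qed

lemma density_diff_count: "(\<lambda>N. real (diff_count N j t) / real N) \<longlonglongrightarrow> delta j t"
proof -
  have "\<forall>j. convergent (\<lambda>N. real (diff_count N j t) / real N)"
  proof (induction t rule: binary_induct)
    case zero
    show ?case using convergentI[OF density_diff_count_zero] by blast
  next
    case one
    show ?case using convergentI[OF density_diff_count_one] by blast
  next
    case (double u)
    show ?case
    proof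
      fix j
      obtain A where "(\<lambda>N. real (diff_count N j u) / real N) \<longlonglongrightarrow> A"
        using double(2) convergent_def by blast
      from tendsto_density_halves[OF this this]
      show "convergent (\<lambda>N. real (diff_count N j (2 * u)) / real N)"
        unfolding diff_count_double convergent_def by blast
    qed
  next
    case (Suc_double u)
    show ?case
    proof
      fix j
      obtain A B where "(\<lambda>N. real (diff_count N (j - 1) u) / real N) \<longlonglongrightarrow> A"
        "(\<lambda>N. real (diff_count N (j + 1) (Suc u)) / real N) \<longlonglongrightarrow> B"
        using Suc_double(2,3) convergent_def by blast
      from tendsto_density_halves[OF this]
      show "convergent (\<lambda>N. real (diff_count N j (Suc (2 * u))) / real N)"
        unfolding diff_count_Suc_double convergent_def by blast
    qed
  qed
  then show ?thesis
    unfolding delta_def diff_count_def[symmetric] by (simp add: convergent_LIMSEQ_iff)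
qed

lemma delta_zero: "delta j 0 = (if j = 0 then 1 else 0)"
  using LIMSEQ_unique[OF density_diff_count density_diff_count_zero] .

lemma delta_one: "delta j 1 = (if j \<le> 1 then (1 / 2) ^ nat (2 - j) else 0)"
  using LIMSEQ_unique[OF density_diff_count density_diff_count_one] .

lemma delta_double: "delta j (2 * u) = delta j u"
  using LIMSEQ_unique[OF density_diff_count, of j "2 * u"]
    tendsto_density_halves[OF density_diff_count density_diff_count]
  unfolding diff_count_double by fastforce

lemma delta_Suc_double: "delta j (Suc (2 * u)) = delta (j - 1) u / 2 + delta (j + 1) (Suc u) / 2"
  using LIMSEQ_unique[OF density_diff_count, of j "Suc (2 * u)"]
    tendsto_density_halves[OF density_diff_count density_diff_count]
  unfolding diff_count_Suc_double by fastforce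

section \<open>Characteristic functions\<close>

definition two_pi_i :: complex where
  "two_pi_i = 2 * of_real pi * \<i>"

(* The radius keeps |exp (- two_pi_i * theta)| below 2, so the geometric series giving charf 1
   converges on the disc. *)
definition disc :: "complex set" where
  "disc = ball 0 (1 / 20)"

definition charf_term :: "nat \<Rightarrow> complex \<Rightarrow> int \<Rightarrow> complex" where
  "charf_term t \<theta> k = of_real (delta k t) * exp (two_pi_i * of_int k * \<theta>)"

lemma charf_eq_infsum: "charf t \<theta> = infsum (charf_term t \<theta>) UNIV"
  unfolding charf_def charf_term_def[abs_def] two_pi_i_def by simp

lemma two_pi_i_neq_0 [simp]: "two_pi_i \<noteq> 0"
  by (simp add: two_pi_i_def)

lemma open_disc [simp]: "open disc" and zero_in_disc [simp]: "0 \<in> disc"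
  by (simp_all add: disc_def)

lemma norm_exp_disc_less_2:
  assumes "\<theta> \<in> disc"
  shows "norm (exp (- two_pi_i * \<theta>)) < 2"
proof -
  have "norm (- two_pi_i * \<theta>) = 2 * pi * norm \<theta>"
    by (simp add: two_pi_i_def norm_mult)
  also have "\<dots> \<le> 2 * 4 * (1 / 20)"
    using assms pi_less_4 by (intro mult_mono) (auto simp: disc_def)
  finally show ?thesis
    using exp_bound_lemma[of "- two_pi_i * \<theta>"] by simp
qed

lemma charf_term_double: "charf_term (2 * u) = charf_term u"
  by (simp add: fun_eq_iff charf_term_def delta_double)

lemma charf_term_Suc_double:
  "charf_term (Suc (2 * u)) \<theta> k =
     (exp (two_pi_i * \<theta>) * charf_term u \<theta> (k - 1)
      + exp (- two_pi_i * \<theta>) * charf_term (Suc u) \<theta> (k + 1)) / 2" (is "_ = ?rhs")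
proof -
  define X where "X = exp (two_pi_i * of_int k * \<theta>)"
  have "two_pi_i * of_int k * \<theta> = two_pi_i * \<theta> + two_pi_i * of_int (k - 1) * \<theta>"
       "two_pi_i * of_int k * \<theta> = - two_pi_i * \<theta> + two_pi_i * of_int (k + 1) * \<theta>"
    by (simp_all add: algebra_simps)
  then have X: "X = exp (two_pi_i * \<theta>) * exp (two_pi_i * of_int (k - 1) * \<theta>)"
       "X = exp (- two_pi_i * \<theta>) * exp (two_pi_i * of_int (k + 1) * \<theta>)"
    unfolding X_def by (metis exp_add)+
  have "charf_term (Suc (2 * u)) \<theta> k = of_real (delta (k - 1) u / 2 + delta (k + 1) (Suc u) / 2) * X"
    unfolding charf_term_def delta_Suc_double X_def ..
  also have "\<dots> = (of_real (delta (k - 1) u) * X + of_real (delta (k + 1) (Suc u)) * X) / 2"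
    by (simp add: field_simps)
  also have "\<dots> = ?rhs"
    unfolding charf_term_def by (subst (1) X(1), subst X(2)) (simp add: mult_ac)
  finally show ?thesis .
qed

lemma has_sum_charf_term_zero: "(charf_term 0 \<theta> has_sum 1) UNIV"
proof -
  have "(charf_term 0 \<theta> has_sum 1) {0}"
    using has_sum_finite[of "{0}" "charf_term 0 \<theta>"] by (simp add: charf_term_def delta_zero)
  then show ?thesis
    by (rule has_sum_cong_neutral[THEN iffD1, rotated -1]) (auto simp: charf_term_def delta_zero)
qed

lemma has_sum_charf_term_one:
  assumes "\<theta> \<in> disc"
  shows "(charf_term 1 \<theta> has_sum exp (two_pi_i * \<theta>) / (2 - exp (- two_pi_i * \<theta>))) UNIV"
proof -
  define E where "E = exp (two_pi_i * \<theta>)"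
  define q where "q = exp (- two_pi_i * \<theta>) / 2"
  have q: "norm q < 1"
    using norm_exp_disc_less_2[OF assms] by (simp add: q_def norm_divide)
  have geometric: "((\<lambda>n. E / 2 * q ^ n) has_sum E / 2 * (1 / (1 - q))) UNIV"
    by (rule norm_summable_imp_has_sum[OF _ sums_mult[OF geometric_sums[OF q]]])
      (use q in \<open>simp add: norm_mult norm_power\<close>)
  have terms: "(\<lambda>n. charf_term 1 \<theta> (1 - int n)) = (\<lambda>n. E / 2 * q ^ n)"
  proof
    fix n
    have "nat (2 - (1 - int n)) = Suc n"
      by simp
    then have "of_real (delta (1 - int n) 1) = (1 / 2 :: complex) ^ Suc n"
      unfolding delta_one by simp
    moreover have "exp (two_pi_i * of_int (1 - int n) * \<theta>) = E * exp (- two_pi_i * \<theta>) ^ n"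
      by (simp add: E_def algebra_simps flip: exp_of_nat_mult exp_add)
    ultimately show "charf_term 1 \<theta> (1 - int n) = E / 2 * q ^ n"
      unfolding charf_term_def q_def by (simp add: power_divide)
  qed
  have "bij_betw (\<lambda>n::nat. 1 - int n) UNIV {k. k \<le> 1}"
    by (rule bij_betwI[where g = "\<lambda>k. nat (1 - k)"]) auto
  then have "(charf_term 1 \<theta> has_sum E / 2 * (1 / (1 - q))) {k. k \<le> 1}"
    by (rule has_sum_reindex_bij_betw[THEN iffD1]) (unfold terms, rule geometric)
  then have "(charf_term 1 \<theta> has_sum E / 2 * (1 / (1 - q))) UNIV"
    by (rule has_sum_cong_neutral[THEN iffD1, rotated -1]) (unfold charf_term_def delta_one, auto)
  moreover have "E / 2 * (1 / (1 - q)) = E / (2 - exp (- two_pi_i * \<theta>))"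
    by (simp add: q_def field_simps)
  ultimately show ?thesis
    by (simp add: E_def)
qed

lemma has_sum_charf_term_Suc_double:
  assumes "(charf_term u \<theta> has_sum S) UNIV" "(charf_term (Suc u) \<theta> has_sum S') UNIV"
  shows "(charf_term (Suc (2 * u)) \<theta> has_sum (exp (two_pi_i * \<theta>) * S + exp (- two_pi_i * \<theta>) * S') / 2) UNIV"
proof -
  have shift: "((\<lambda>k. f (k + a)) has_sum s) UNIV \<longleftrightarrow> (f has_sum s) UNIV" for f :: "int \<Rightarrow> complex" and a s
    by (rule has_sum_reindex_bij_betw) (rule bij_betwI[where g = "\<lambda>k. k - a"], auto)
  have eq: "charf_term (Suc (2 * u)) \<theta> =
      (\<lambda>k. (exp (two_pi_i * \<theta>) * charf_term u \<theta> (k + - 1) + exp (- two_pi_i * \<theta>) * charf_term (Suc u) \<theta> (k + 1)) / 2)"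
    by (simp add: fun_eq_iff charf_term_Suc_double)
  have "((\<lambda>k. (exp (two_pi_i * \<theta>) * charf_term u \<theta> (k + - 1) + exp (- two_pi_i * \<theta>) * charf_term (Suc u) \<theta> (k + 1)) / 2)
      has_sum (exp (two_pi_i * \<theta>) * S + exp (- two_pi_i * \<theta>) * S') / 2) UNIV"
    using assms shift[of "charf_term u \<theta>" "- 1"] shift[of "charf_term (Suc u) \<theta>" 1]
    by (intro has_sum_divide_const has_sum_add has_sum_cmult_right) simp_all
  then show ?thesis
    unfolding eq .
qed

lemma has_sum_charf_term:
  assumes "\<theta> \<in> disc"
  shows "(charf_term t \<theta> has_sum charf t \<theta>) UNIV"
proof -
  have "charf_term t \<theta> summable_on UNIV"
  proof (induction t rule: binary_induct)
    case zero
    then show ?case using has_sum_charf_term_zero by (auto simp: summable_on_def)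
  next
    case one
    then show ?case using has_sum_charf_term_one[OF assms] by (auto simp: summable_on_def)
  next
    case (double u)
    then show ?case by (simp add: charf_term_double)
  next
    case (Suc_double u)
    then show ?case
      using has_sum_charf_term_Suc_double[OF has_sum_infsum has_sum_infsum] by (auto simp: summable_on_def)
  qed
  then show ?thesis
    by (simp add: charf_eq_infsum)
qed

lemma charf_zero: "charf 0 \<theta> = 1"
  using has_sum_charf_term_zero by (simp add: charf_eq_infsum infsumI)

lemma charf_one: "\<theta> \<in> disc \<Longrightarrow> charf 1 \<theta> = exp (two_pi_i * \<theta>) / (2 - exp (- two_pi_i * \<theta>))"
  using has_sum_charf_term_one by (simp add: charf_eq_infsum infsumI)

lemma charf_double: "charf (2 * u) = charf u"
  by (simp add: fun_eq_iff charf_eq_infsum charf_term_double)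

lemma charf_Suc_double:
  "\<theta> \<in> disc \<Longrightarrow>
     charf (Suc (2 * u)) \<theta> = (exp (two_pi_i * \<theta>) * charf u \<theta> + exp (- two_pi_i * \<theta>) * charf (Suc u) \<theta>) / 2"
  using has_sum_unique[OF has_sum_charf_term has_sum_charf_term_Suc_double[OF has_sum_charf_term has_sum_charf_term]] .

lemma holomorphic_charf: "charf t holomorphic_on disc"
proof (induction t rule: binary_induct)
  case zero
  then show ?case by (simp add: charf_zero)
next
  case one
  have "2 - exp (- two_pi_i * \<theta>) \<noteq> 0" if "\<theta> \<in> disc" for \<theta>
  proof
    assume "2 - exp (- two_pi_i * \<theta>) = 0"
    then have "norm (exp (- two_pi_i * \<theta>)) = 2"
      by (simp only: right_minus_eq flip:) simp
    with norm_exp_disc_less_2[OF that] show False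
      by simp
  qed
  then have "(\<lambda>\<theta>. exp (two_pi_i * \<theta>) / (2 - exp (- two_pi_i * \<theta>))) holomorphic_on disc"
    by (intro holomorphic_intros) auto
  then show ?case
    by (rule holomorphic_transform) (rule charf_one[symmetric])
next
  case (double u)
  then show ?case by (simp add: charf_double)
next
  case (Suc_double u)
  then have "(\<lambda>\<theta>. (exp (two_pi_i * \<theta>) * charf u \<theta> + exp (- two_pi_i * \<theta>) * charf (Suc u) \<theta>) / 2) holomorphic_on disc"
    by (intro holomorphic_intros) auto
  then show ?case
    by (rule holomorphic_transform) (simp add: charf_Suc_double)
qed

section \<open>Cumulants\<close>

definition charf_deriv :: "nat \<Rightarrow> nat \<Rightarrow> complex" where
  "charf_deriv n t = (deriv ^^ n) (charf t) 0"

lemma higher_deriv_exp_linear: "(deriv ^^ n) (\<lambda>z. exp (a * z)) = (\<lambda>z::complex. a ^ n * exp (a * z))"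
proof (induction n)
  case (Suc n)
  have "deriv (\<lambda>z. a ^ n * exp (a * z)) z = a ^ Suc n * exp (a * z)" for z
    by (rule DERIV_imp_deriv) (auto intro!: derivative_eq_intros)
  then show ?case
    unfolding funpow.simps o_apply Suc.IH by (rule ext)
qed simp

lemma charf_deriv_double: "charf_deriv n (2 * u) = charf_deriv n u"
  by (simp add: charf_deriv_def charf_double)

lemma charf_deriv_Suc_double:
  "charf_deriv n (Suc (2 * u)) =
     (\<Sum>i = 0..n. of_nat (n choose i) *
        (two_pi_i ^ i * charf_deriv (n - i) u + (- two_pi_i) ^ i * charf_deriv (n - i) (Suc u))) / 2"
proof -
  have hol: "(\<lambda>\<theta>. exp (c * \<theta>) * charf s \<theta>) holomorphic_on disc" for c s
    by (intro holomorphic_intros holomorphic_charf)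
  have leibniz: "(deriv ^^ n) (\<lambda>\<theta>. exp (c * \<theta>) * charf s \<theta>) 0 =
      (\<Sum>i = 0..n. of_nat (n choose i) * (c ^ i * charf_deriv (n - i) s))" for c s
  proof -
    have "(deriv ^^ n) (\<lambda>\<theta>. exp (c * \<theta>) * charf s \<theta>) 0 =
        (\<Sum>i = 0..n. of_nat (n choose i) * (deriv ^^ i) (\<lambda>\<theta>. exp (c * \<theta>)) 0 * (deriv ^^ (n - i)) (charf s) 0)"
      by (rule higher_deriv_mult) (auto intro!: holomorphic_intros holomorphic_charf)
    then show ?thesis
      by (simp add: higher_deriv_exp_linear charf_deriv_def mult.assoc)
  qed
  have "charf_deriv n (Suc (2 * u)) =
      (deriv ^^ n) (\<lambda>\<theta>. inverse 2 * (exp (two_pi_i * \<theta>) * charf u \<theta> + exp (- two_pi_i * \<theta>) * charf (Suc u) \<theta>)) 0"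
    unfolding charf_deriv_def
  proof (rule higher_deriv_transform_within_open[of _ disc])
    fix \<theta> assume "\<theta> \<in> disc"
    then show "charf (Suc (2 * u)) \<theta> =
        inverse 2 * (exp (two_pi_i * \<theta>) * charf u \<theta> + exp (- two_pi_i * \<theta>) * charf (Suc u) \<theta>)"
      by (simp only: charf_Suc_double divide_inverse_commute)
  qed (auto intro!: holomorphic_intros holomorphic_charf)
  also have "\<dots> = inverse 2 * (deriv ^^ n)
      (\<lambda>\<theta>. exp (two_pi_i * \<theta>) * charf u \<theta> + exp (- two_pi_i * \<theta>) * charf (Suc u) \<theta>) 0"
    by (rule higher_deriv_cmult[of _ disc]) (auto intro!: holomorphic_intros holomorphic_charf)
  also have "\<dots> = inverse 2 * ((deriv ^^ n) (\<lambda>\<theta>. exp (two_pi_i * \<theta>) * charf u \<theta>) 0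
      + (deriv ^^ n) (\<lambda>\<theta>. exp (- two_pi_i * \<theta>) * charf (Suc u) \<theta>) 0)"
    by (simp only: higher_deriv_add[OF hol hol open_disc zero_in_disc])
  also have "\<dots> = inverse 2 * ((\<Sum>i = 0..n. of_nat (n choose i) * (two_pi_i ^ i * charf_deriv (n - i) u))
      + (\<Sum>i = 0..n. of_nat (n choose i) * ((- two_pi_i) ^ i * charf_deriv (n - i) (Suc u))))"
    by (simp only: leibniz)
  finally show ?thesis
    by (simp only: sum.distrib distrib_left divide_inverse_commute)
qed

lemma charf_deriv_Suc_double_upto_3:
  fixes u :: nat
  defines "g n \<equiv> charf_deriv n u" and "h n \<equiv> charf_deriv n (Suc u)"
  shows "charf_deriv 0 (Suc (2 * u)) = (g 0 + h 0) / 2"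
    and "charf_deriv 1 (Suc (2 * u)) = (g 1 + h 1 + two_pi_i * (g 0 - h 0)) / 2"
    and "charf_deriv 2 (Suc (2 * u)) = (g 2 + h 2 + 2 * two_pi_i * (g 1 - h 1) + two_pi_i ^ 2 * (g 0 + h 0)) / 2"
    and "charf_deriv 3 (Suc (2 * u)) =
      (g 3 + h 3 + 3 * two_pi_i * (g 2 - h 2) + 3 * two_pi_i ^ 2 * (g 1 + h 1) + two_pi_i ^ 3 * (g 0 - h 0)) / 2"
  unfolding g_def h_def charf_deriv_Suc_double
  by (simp_all add: numeral_3_eq_3 numeral_2_eq_2 algebra_simps)

lemma charf_deriv_zero: "charf_deriv n 0 = (if n = 0 then 1 else 0)"
proof -
  have "charf 0 = (\<lambda>_. 1)"
    by (simp add: fun_eq_iff charf_zero)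
  then show ?thesis
    by (simp add: charf_deriv_def)
qed

lemma charf_deriv_0_1: "charf_deriv 0 t = 1 \<and> charf_deriv 1 t = 0"
proof (induction t rule: binary_induct)
  case zero
  then show ?case by (simp add: charf_deriv_zero)
next
  case one
  have "charf_deriv 0 1 = 1"
    using charf_deriv_Suc_double_upto_3(1)[of 0] by (simp add: charf_deriv_zero)
  moreover from this have "charf_deriv 1 1 = 0"
    using charf_deriv_Suc_double_upto_3(2)[of 0] by (simp add: charf_deriv_zero field_simps)
  ultimately show ?case by simp
next
  case (double u)
  then show ?case by (simp add: charf_deriv_double)
next
  case (Suc_double u)
  then show ?case using charf_deriv_Suc_double_upto_3[of u] by simp
qed

lemma deriv_Ln_comp_mult:
  assumes g: "g holomorphic_on T" "open T" and w: "w \<in> T" "g w \<notin> \<real>\<^sub>\<le>\<^sub>0"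
  shows "deriv (\<lambda>w. Ln (g w)) w * g w = deriv g w"
proof -
  have "((\<lambda>w. Ln (g w)) has_field_derivative inverse (g w) * deriv g w) (at w)"
    by (rule DERIV_chain2[OF has_field_derivative_Ln[OF w(2)] holomorphic_derivI[OF g w(1)]])
  then have "deriv (\<lambda>w. Ln (g w)) w = inverse (g w) * deriv g w"
    by (rule DERIV_imp_deriv)
  moreover have "g w \<noteq> 0"
    using w(2) by auto
  ultimately show ?thesis
    by simp
qed

lemma higher_deriv_Ln_at_1:
  fixes g :: "complex \<Rightarrow> complex"
  assumes g: "g holomorphic_on S" and S: "open S" "z \<in> S" and g1: "g z = 1" and g': "deriv g z = 0"
  shows "(deriv ^^ 2) (\<lambda>w. Ln (g w)) z = (deriv ^^ 2) g z"
    and "(deriv ^^ 3) (\<lambda>w. Ln (g w)) z = (deriv ^^ 3) g z"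
proof -
  define T where "T = S \<inter> g -` {w. 0 < Re w}"
  have "open T"
    unfolding T_def
    by (rule continuous_open_preimage[OF holomorphic_on_imp_continuous_on[OF g] S(1) open_halfspace_Re_gt])
  have "z \<in> T" "T \<subseteq> S"
    using S g1 by (auto simp: T_def)
  then have gT: "g holomorphic_on T"
    using g holomorphic_on_subset by blast
  have slit: "g w \<notin> \<real>\<^sub>\<le>\<^sub>0" if "w \<in> T" for w
    using that by (auto simp: T_def complex_nonpos_Reals_iff)
  define L where "L = (\<lambda>w. Ln (g w))"
  have "L holomorphic_on T"
    unfolding L_def by (intro holomorphic_intros slit gT)
  then have hol_L': "deriv L holomorphic_on T"
    using \<open>open T\<close> by (intro holomorphic_intros)
  \<comment> \<open>Leibniz's rule applied to the identity L' g = g' on T\<close>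
  have "(deriv ^^ n) (\<lambda>w. deriv L w * g w) z = (deriv ^^ n) (deriv g) z" for n
    using deriv_Ln_comp_mult[OF gT \<open>open T\<close> _ slit] unfolding L_def[symmetric]
    by (intro higher_deriv_transform_within_open[OF _ _ \<open>open T\<close> \<open>z \<in> T\<close>])
      (use hol_L' gT \<open>open T\<close> in \<open>auto intro!: holomorphic_intros\<close>)
  then have leibniz:
    "(\<Sum>i = 0..n. of_nat (n choose i) * (deriv ^^ Suc i) L z * (deriv ^^ (n - i)) g z) = (deriv ^^ Suc n) g z" for n
    by (simp add: higher_deriv_mult[OF hol_L' gT \<open>open T\<close> \<open>z \<in> T\<close>] funpow_Suc_right del: funpow.simps)
  have L1: "(deriv ^^ 1) L z = 0"
    using leibniz[of 0] g1 g' by simp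
  show L2: "(deriv ^^ 2) L z = (deriv ^^ 2) g z"
    using leibniz[of 1] g1 g' L1 by (simp add: numeral_2_eq_2)
  show "(deriv ^^ 3) L z = (deriv ^^ 3) g z"
    using leibniz[of 2] g1 g' L1 L2 by (simp add: numeral_3_eq_3 numeral_2_eq_2)
qed

lemma charf_deriv_0: "charf_deriv 0 t = 1"
  using charf_deriv_0_1 by blast

lemma charf_deriv_1: "charf_deriv 1 t = 0"
  using charf_deriv_0_1 by blast

lemma cumulant_eq_charf_deriv:
  assumes "n = 2 \<or> n = 3"
  shows "cumulant n t = Re (charf_deriv n t / two_pi_i ^ n)"
proof -
  have "charf t 0 = 1" "deriv (charf t) 0 = 0"
    using charf_deriv_0[of t] charf_deriv_1[of t] by (simp_all add: charf_deriv_def)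
  from higher_deriv_Ln_at_1[OF holomorphic_charf open_disc zero_in_disc this] assms show ?thesis
    by (auto simp: cumulant_def charf_deriv_def two_pi_i_def)
qed

lemma cumulant_double: "cumulant n (2 * u) = cumulant n u"
  by (simp add: cumulant_def charf_double)

lemma cumulant_zero: "cumulant n 0 = 0"
proof -
  have "(\<lambda>\<theta>. Ln (charf 0 \<theta>)) = (\<lambda>_. 0)"
    by (simp add: fun_eq_iff charf_zero)
  then show ?thesis
    by (simp add: cumulant_def)
qed

lemma cumulant2_Suc_double: "cumulant 2 (Suc (2 * u)) = 1 + (cumulant 2 u + cumulant 2 (Suc u)) / 2"
proof -
  define k where "k s = charf_deriv 2 s / two_pi_i ^ 2" for s
  have "k (Suc (2 * u)) = 1 + (k u + k (Suc u)) / 2"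
    unfolding k_def charf_deriv_Suc_double_upto_3(3) charf_deriv_0 charf_deriv_1 by (simp add: field_simps)
  then show ?thesis
    by (simp add: cumulant_eq_charf_deriv flip: k_def)
qed

lemma cumulant3_Suc_double:
  "cumulant 3 (Suc (2 * u)) = (cumulant 3 u + cumulant 3 (Suc u)) / 2 + 3 * (cumulant 2 u - cumulant 2 (Suc u)) / 2"
proof -
  define k where "k n s = charf_deriv n s / two_pi_i ^ n" for n s
  have "k 3 (Suc (2 * u)) = (k 3 u + k 3 (Suc u)) / 2 + 3 * (k 2 u - k 2 (Suc u)) / 2"
    unfolding k_def charf_deriv_Suc_double_upto_3(4) charf_deriv_0 charf_deriv_1
    by (simp add: field_simps power2_eq_square power3_eq_cube)
  then show ?thesis
    by (simp add: cumulant_eq_charf_deriv flip: k_def)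
qed

lemma cumulant2_one: "cumulant 2 1 = 2"
  using cumulant2_Suc_double[of 0] by (simp add: cumulant_zero)

lemma cumulant3_one: "cumulant 3 1 = -6"
  using cumulant3_Suc_double[of 0] cumulant2_one by (simp add: cumulant_zero)

definition kappa2_gap :: "nat \<Rightarrow> real" where
  "kappa2_gap t = cumulant 2 t - cumulant 2 (Suc t)"

definition D_gain :: "nat \<Rightarrow> real" where
  "D_gain t = 1 + (cumulant 3 (Suc t) - cumulant 3 t) / 6"

lemma cumulant_Suc_Suc_double: "cumulant n (Suc (Suc (2 * u))) = cumulant n (Suc u)"
  using cumulant_double[of n "Suc u"] by simp

lemma Dfun_double: "Dfun (2 * u) = Dfun u"
  unfolding Dfun_def cumulant_double ..

lemma Dfun_Suc_double: "Dfun (Suc (2 * u)) = Dfun (Suc u) + D_gain u"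
  unfolding Dfun_def D_gain_def cumulant2_Suc_double cumulant3_Suc_double by (simp add: field_simps)

lemma kappa2_gap_double: "kappa2_gap (2 * u) = kappa2_gap u / 2 - 1"
  unfolding kappa2_gap_def cumulant_double cumulant2_Suc_double by (simp add: field_simps)

lemma kappa2_gap_Suc_double: "kappa2_gap (Suc (2 * u)) = kappa2_gap u / 2 + 1"
  unfolding kappa2_gap_def cumulant_Suc_Suc_double cumulant2_Suc_double by (simp add: field_simps)

lemma D_gain_double: "D_gain (2 * u) = D_gain u / 2 + (2 + kappa2_gap u) / 4"
  unfolding D_gain_def kappa2_gap_def cumulant_double cumulant3_Suc_double by (simp add: field_simps)

lemma D_gain_Suc_double: "D_gain (Suc (2 * u)) = D_gain u / 2 + (2 - kappa2_gap u) / 4"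
  unfolding D_gain_def kappa2_gap_def cumulant_Suc_Suc_double cumulant3_Suc_double by (simp add: field_simps)

lemma Dfun_one: "Dfun 1 = 4"
  using cumulant2_one cumulant3_one by (simp add: Dfun_def)

lemma Dfun_two: "Dfun 2 = 4"
  using Dfun_double[of 1] Dfun_one by simp

lemma kappa2_gap_one: "kappa2_gap 1 = 0"
  using cumulant2_one cumulant_double[of 2 1] by (simp add: kappa2_gap_def numeral_2_eq_2)

lemma D_gain_one: "D_gain 1 = 1"
  using cumulant3_one cumulant_double[of 3 1] by (simp add: D_gain_def numeral_2_eq_2)

section \<open>Blocks of binary digits\<close>

lemma bit_imp_less: "bit (n::nat) i \<Longrightarrow> i < n"
proof -
  assume "bit n i"
  then have "odd (n div 2 ^ i)"
    by (simp add: bit_iff_odd)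
  then have "n div 2 ^ i \<noteq> 0"
    by (metis even_zero)
  then have "2 ^ i \<le> n"
    by (simp add: div_eq_0_iff not_less)
  with less_exp[of i] show "i < n"
    by linarith
qed

lemma finite_one_blocks: "finite (one_blocks t)"
proof (rule finite_subset)
  show "one_blocks t \<subseteq> {..t} \<times> {..t}"
  proof
    fix p assume "p \<in> one_blocks t"
    then obtain a b where "p = (a, b)" "a \<le> b" "bit t b"
      by (auto simp: one_blocks_def)
    then show "p \<in> {..t} \<times> {..t}"
      using bit_imp_less[of t b] by auto
  qed
qed simp

lemma finite_inner_zero_blocks: "finite (inner_zero_blocks t)"
proof (rule finite_subset)
  show "inner_zero_blocks t \<subseteq> {..t} \<times> {..t}"
  proof
    fix p assume "p \<in> inner_zero_blocks t"
    then obtain a b where "p = (a, b)" "a \<le> b" "bit t (Suc b)"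
      by (auto simp: inner_zero_blocks_def)
    then show "p \<in> {..t} \<times> {..t}"
      using bit_imp_less[of t "Suc b"] by auto
  qed
qed simp

lemma ball_atLeastAtMost_Suc: "(\<forall>i\<in>{Suc a..Suc b}. P i) \<longleftrightarrow> (\<forall>i\<in>{a..b}. P (Suc i))"
  by (metis image_Suc_atLeastAtMost imageE imageI)

lemma bit_double_nat:
  "\<not> bit (2 * u :: nat) 0" "bit (2 * u :: nat) (Suc i) \<longleftrightarrow> bit u i"
  by (simp_all add: bit_0 bit_Suc)

lemma bit_Suc_double_nat:
  "bit (Suc (2 * u) :: nat) 0" "bit (Suc (2 * u) :: nat) (Suc i) \<longleftrightarrow> bit u i"
  by (simp_all add: bit_0 bit_Suc)

lemma eq_image_map_prod_Suc:
  assumes "\<And>a b. (a, b) \<in> Y \<Longrightarrow> a \<noteq> 0 \<and> b \<noteq> 0" and "\<And>a b. (Suc a, Suc b) \<in> Y \<longleftrightarrow> (a, b) \<in> X"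
  shows "Y = map_prod Suc Suc ` X"
proof (intro set_eqI iffI)
  fix p assume "p \<in> Y"
  moreover obtain a b where "p = (a, b)"
    by fastforce
  ultimately obtain a' b' where "p = (Suc a', Suc b')"
    using assms(1) not0_implies_Suc by blast
  with \<open>p \<in> Y\<close> assms(2) show "p \<in> map_prod Suc Suc ` X"
    by force
qed (use assms(2) in auto)

lemma card_filter_image_map_prod_Suc:
  assumes "\<And>a b. P (Suc a) (Suc b) \<longleftrightarrow> P a b"
  shows "card {(a, b) \<in> map_prod Suc Suc ` X. P a b} = card {(a, b) \<in> X. P a b}"
proof -
  have "{(a, b) \<in> map_prod Suc Suc ` X. P a b} = map_prod Suc Suc ` {(a, b) \<in> X. P a b}"
    using assms by auto
  moreover have "inj (map_prod Suc Suc)"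
    by (simp add: map_prod_inj_on[of _ UNIV _ UNIV, simplified])
  ultimately show ?thesis
    by (simp add: card_image inj_on_subset)
qed

lemma card_filter_insert:
  assumes "finite Y" "(a0, b0) \<notin> Y"
  shows "card {(a, b) \<in> insert (a0, b0) Y. P a b} = card {(a, b) \<in> Y. P a b} + of_bool (P a0 b0)"
proof (cases "P a0 b0")
  case True
  then have "{(a, b) \<in> insert (a0, b0) Y. P a b} = insert (a0, b0) {(a, b) \<in> Y. P a b}"
    by auto
  moreover have "finite {(a, b) \<in> Y. P a b}"
    using assms(1) by (rule finite_subset[rotated]) auto
  moreover have "(a0, b0) \<notin> {(a, b) \<in> Y. P a b}"
    using assms(2) by auto
  ultimately show ?thesis
    using True by simp
next
  case False
  then have "{(a, b) \<in> insert (a0, b0) Y. P a b} = {(a, b) \<in> Y. P a b}"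
    by auto
  with False show ?thesis
    by simp
qed

lemma bit_one_blocks: "(a, b) \<in> one_blocks t \<Longrightarrow> a \<le> i \<Longrightarrow> i \<le> b \<Longrightarrow> bit t i"
  by (simp add: one_blocks_def)

lemma one_blocks_fst_le_snd: "(a, b) \<in> one_blocks t \<Longrightarrow> a \<le> b"
  by (simp add: one_blocks_def)

lemma one_blocks_0_unique:
  assumes "(0, b) \<in> one_blocks t" "(0, c) \<in> one_blocks t"
  shows "b = c"
proof (rule ccontr)
  assume "b \<noteq> c"
  then consider "b < c" | "c < b"
    by linarith
  then show False
    by cases (use assms in \<open>auto simp: one_blocks_def\<close>)
qed

lemma mem_one_blocks_double_Suc: "(Suc a, Suc b) \<in> one_blocks (2 * u) \<longleftrightarrow> (a, b) \<in> one_blocks u"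
  unfolding one_blocks_def by (cases a) (simp_all add: ball_atLeastAtMost_Suc bit_double_nat)

lemma mem_one_blocks_Suc_double_Suc:
  "(Suc a, Suc b) \<in> one_blocks (Suc (2 * u)) \<longleftrightarrow> (a, b) \<in> one_blocks u \<and> a \<noteq> 0"
  unfolding one_blocks_def by (cases a) (simp_all add: ball_atLeastAtMost_Suc bit_Suc_double_nat)

lemma mem_one_blocks_Suc_double_0:
  "(0, 0) \<in> one_blocks (Suc (2 * u)) \<longleftrightarrow> \<not> bit u 0"
  "(0, Suc b) \<in> one_blocks (Suc (2 * u)) \<longleftrightarrow> (0, b) \<in> one_blocks u"
proof -
  have "{0..Suc b} = insert 0 (Suc ` {0..b})"
    by (simp add: atLeast0_atMost_Suc_eq_insert_0)
  then have "(\<forall>i\<in>{0..Suc b}. bit (Suc (2 * u)) i) \<longleftrightarrow> (\<forall>i\<in>{0..b}. bit u i)"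
    by (simp add: bit_Suc_double_nat ball_atLeastAtMost_Suc)
  then show "(0, Suc b) \<in> one_blocks (Suc (2 * u)) \<longleftrightarrow> (0, b) \<in> one_blocks u"
    by (simp add: one_blocks_def bit_Suc_double_nat)
qed (simp add: one_blocks_def bit_Suc_double_nat)

lemma one_blocks_double: "one_blocks (2 * u) = map_prod Suc Suc ` one_blocks u"
proof (rule eq_image_map_prod_Suc)
  fix a b assume ab: "(a, b) \<in> one_blocks (2 * u)"
  then have "a \<noteq> 0"
    using bit_one_blocks[OF ab order.refl one_blocks_fst_le_snd[OF ab]] bit_double_nat(1)[of u] by (cases a) auto
  with one_blocks_fst_le_snd[OF ab] show "a \<noteq> 0 \<and> b \<noteq> 0"
    by simp
qed (rule mem_one_blocks_double_Suc)

lemma one_blocks_Suc_double_even: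
  assumes "even u"
  shows "one_blocks (Suc (2 * u)) = insert (0, 0) (map_prod Suc Suc ` one_blocks u)"
proof -
  have "(0, 0) \<in> one_blocks (Suc (2 * u))"
    using assms by (simp add: mem_one_blocks_Suc_double_0 bit_0)
  moreover have "one_blocks (Suc (2 * u)) - {(0, 0)} = map_prod Suc Suc ` one_blocks u"
  proof (rule eq_image_map_prod_Suc)
    fix a b assume ab: "(a, b) \<in> one_blocks (Suc (2 * u)) - {(0, 0)}"
    then have "a \<noteq> 0"
      using one_blocks_0_unique[OF \<open>(0, 0) \<in> one_blocks (Suc (2 * u))\<close>, of b] by (cases a) auto
    with ab show "a \<noteq> 0 \<and> b \<noteq> 0"
      using one_blocks_fst_le_snd[of a b "Suc (2 * u)"] by auto
  next
    fix a b
    have "(0, b) \<notin> one_blocks u"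
      using assms bit_one_blocks[of 0 b u 0] by (auto simp: bit_0)
    then show "(Suc a, Suc b) \<in> one_blocks (Suc (2 * u)) - {(0, 0)} \<longleftrightarrow> (a, b) \<in> one_blocks u"
      by (cases a) (auto simp: mem_one_blocks_Suc_double_Suc)
  qed
  ultimately show ?thesis
    by blast
qed

lemma one_blocks_Suc_double_odd:
  assumes "(0, b) \<in> one_blocks u"
  shows "one_blocks (Suc (2 * u)) = insert (0, Suc b) (map_prod Suc Suc ` (one_blocks u - {(0, b)}))"
proof -
  have "(0, Suc b) \<in> one_blocks (Suc (2 * u))"
    using assms by (simp add: mem_one_blocks_Suc_double_0)
  moreover have "one_blocks (Suc (2 * u)) - {(0, Suc b)} = map_prod Suc Suc ` (one_blocks u - {(0, b)})"
  proof (rule eq_image_map_prod_Suc)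
    fix a c assume ac: "(a, c) \<in> one_blocks (Suc (2 * u)) - {(0, Suc b)}"
    then have "a \<noteq> 0"
      using one_blocks_0_unique[OF \<open>(0, Suc b) \<in> one_blocks (Suc (2 * u))\<close>, of c] by (cases a) auto
    with ac show "a \<noteq> 0 \<and> c \<noteq> 0"
      using one_blocks_fst_le_snd[of a c "Suc (2 * u)"] by auto
  next
    fix a c
    show "(Suc a, Suc c) \<in> one_blocks (Suc (2 * u)) - {(0, Suc b)} \<longleftrightarrow> (a, c) \<in> one_blocks u - {(0, b)}"
      using one_blocks_0_unique[OF assms, of c] by (cases a) (auto simp: mem_one_blocks_Suc_double_Suc)
  qed
  ultimately show ?thesis
    by blast
qed

lemma inner_zero_blocks_fst_le_snd: "(a, b) \<in> inner_zero_blocks t \<Longrightarrow> 0 < a \<and> a \<le> b"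
  by (simp add: inner_zero_blocks_def)

lemma mem_inner_zero_blocks_double_Suc:
  "(Suc a, Suc b) \<in> inner_zero_blocks (2 * u) \<longleftrightarrow> (a, b) \<in> inner_zero_blocks u"
  unfolding inner_zero_blocks_def by (cases a) (simp_all add: ball_atLeastAtMost_Suc bit_double_nat)

lemma mem_inner_zero_blocks_Suc_double_Suc_Suc:
  "(Suc (Suc a), Suc b) \<in> inner_zero_blocks (Suc (2 * u)) \<longleftrightarrow> (Suc a, b) \<in> inner_zero_blocks u"
  unfolding inner_zero_blocks_def by (simp add: ball_atLeastAtMost_Suc bit_Suc_double_nat)

lemma mem_inner_zero_blocks_Suc_double_1:
  "(1, Suc b) \<in> inner_zero_blocks (Suc (2 * u)) \<longleftrightarrow> (\<forall>i\<le>b. \<not> bit u i) \<and> bit u (Suc b)"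
  unfolding inner_zero_blocks_def using ball_atLeastAtMost_Suc[of 0 b "\<lambda>i. \<not> bit (Suc (2 * u)) i"]
  by (auto simp: bit_Suc_double_nat)

lemma inner_zero_blocks_double: "inner_zero_blocks (2 * u) = map_prod Suc Suc ` inner_zero_blocks u"
proof (rule eq_image_map_prod_Suc)
  fix a b assume "(a, b) \<in> inner_zero_blocks (2 * u)"
  then show "a \<noteq> 0 \<and> b \<noteq> 0"
    using inner_zero_blocks_fst_le_snd by fastforce
qed (rule mem_inner_zero_blocks_double_Suc)

lemma inner_zero_blocks_Suc_double_odd:
  assumes "odd u"
  shows "inner_zero_blocks (Suc (2 * u)) = map_prod Suc Suc ` inner_zero_blocks u"
proof (rule eq_image_map_prod_Suc)
  fix a b assume "(a, b) \<in> inner_zero_blocks (Suc (2 * u))"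
  then show "a \<noteq> 0 \<and> b \<noteq> 0"
    using inner_zero_blocks_fst_le_snd by fastforce
next
  fix a b
  show "(Suc a, Suc b) \<in> inner_zero_blocks (Suc (2 * u)) \<longleftrightarrow> (a, b) \<in> inner_zero_blocks u"
  proof (cases a)
    case 0
    have "(1, Suc b) \<notin> inner_zero_blocks (Suc (2 * u))"
      using assms unfolding mem_inner_zero_blocks_Suc_double_1 by (auto simp: bit_0)
    with 0 show ?thesis
      using inner_zero_blocks_fst_le_snd[of 0 b u] by auto
  next
    case (Suc a')
    then show ?thesis
      by (simp add: mem_inner_zero_blocks_Suc_double_Suc_Suc)
  qed
qed

lemma inner_zero_blocks_Suc_double_even:
  assumes low: "\<forall>i<b. \<not> bit u i" "bit u b" and "0 < b"
  shows "inner_zero_blocks (Suc (2 * u)) = insert (1, b) (map_prod Suc Suc ` inner_zero_blocks u)"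
proof -
  have lowest: "(1, Suc c) \<in> inner_zero_blocks (Suc (2 * u)) \<longleftrightarrow> Suc c = b" for c
    unfolding mem_inner_zero_blocks_Suc_double_1
    using low by (cases "Suc c" b rule: linorder_cases) auto
  have "(1, b) \<in> inner_zero_blocks (Suc (2 * u))"
    using lowest[of "b - 1"] \<open>0 < b\<close> by simp
  moreover have "inner_zero_blocks (Suc (2 * u)) - {(1, b)} = map_prod Suc Suc ` inner_zero_blocks u"
  proof (rule eq_image_map_prod_Suc)
    fix a c assume "(a, c) \<in> inner_zero_blocks (Suc (2 * u)) - {(1, b)}"
    then show "a \<noteq> 0 \<and> c \<noteq> 0"
      using inner_zero_blocks_fst_le_snd by fastforce
  next
    fix a c
    show "(Suc a, Suc c) \<in> inner_zero_blocks (Suc (2 * u)) - {(1, b)} \<longleftrightarrow> (a, c) \<in> inner_zero_blocks u"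
    proof (cases a)
      case 0
      then show ?thesis
        using lowest[of c] inner_zero_blocks_fst_le_snd[of 0 c u] by auto
    next
      case (Suc a')
      then show ?thesis
        by (simp add: mem_inner_zero_blocks_Suc_double_Suc_Suc)
    qed
  qed
  ultimately show ?thesis
    by blast
qed

lemma Lcount_double: "Lcount k (2 * u) = Lcount k u"
  unfolding Lcount_def one_blocks_double by (rule card_filter_image_map_prod_Suc) simp

lemma Kcount_double: "Kcount (2 * u) = Kcount u"
  unfolding Kcount_def inner_zero_blocks_double by (rule card_filter_image_map_prod_Suc) simp

lemma Lcount_Suc_double_even:
  assumes "1 \<le> k" "even u"
  shows "Lcount k (Suc (2 * u)) = Lcount k u + 1"
proof -
  have "Lcount k (Suc (2 * u)) =
      card {(a, b) \<in> map_prod Suc Suc ` one_blocks u. b - a + 1 \<le> k} + of_bool (0 - 0 + 1 \<le> k)"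
    unfolding Lcount_def one_blocks_Suc_double_even[OF assms(2)]
    by (rule card_filter_insert) (auto simp: finite_one_blocks)
  also have "card {(a, b) \<in> map_prod Suc Suc ` one_blocks u. b - a + 1 \<le> k} = Lcount k u"
    unfolding Lcount_def by (rule card_filter_image_map_prod_Suc) simp
  finally show ?thesis
    using assms(1) by simp
qed

lemma Lcount_Suc_double_odd:
  assumes "(0, b) \<in> one_blocks u"
  shows "Lcount k (Suc (2 * u)) + of_bool (b + 1 \<le> k) = Lcount k u + of_bool (b + 2 \<le> k)"
proof -
  let ?X = "one_blocks u - {(0, b)}"
  have "Lcount k (Suc (2 * u)) =
      card {(a, c) \<in> map_prod Suc Suc ` ?X. c - a + 1 \<le> k} + of_bool (Suc b - 0 + 1 \<le> k)"
    unfolding Lcount_def one_blocks_Suc_double_odd[OF assms]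
    by (rule card_filter_insert) (auto simp: finite_one_blocks)
  also have "card {(a, c) \<in> map_prod Suc Suc ` ?X. c - a + 1 \<le> k} = card {(a, c) \<in> ?X. c - a + 1 \<le> k}"
    by (rule card_filter_image_map_prod_Suc) simp
  finally have odd: "Lcount k (Suc (2 * u)) = card {(a, c) \<in> ?X. c - a + 1 \<le> k} + of_bool (b + 2 \<le> k)"
    by simp
  have "Lcount k u = card {(a, c) \<in> insert (0, b) ?X. c - a + 1 \<le> k}"
    unfolding Lcount_def insert_Diff[OF assms] ..
  also have "\<dots> = card {(a, c) \<in> ?X. c - a + 1 \<le> k} + of_bool (b - 0 + 1 \<le> k)"
    by (rule card_filter_insert) (auto simp: finite_one_blocks)
  finally show ?thesis
    using odd by simp
qed

lemma Kcount_Suc_double_odd: "odd u \<Longrightarrow> Kcount (Suc (2 * u)) = Kcount u"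
  unfolding Kcount_def inner_zero_blocks_Suc_double_odd by (rule card_filter_image_map_prod_Suc) simp

lemma Kcount_Suc_double_even:
  assumes "\<forall>i<b. \<not> bit u i" "bit u b" "0 < b"
  shows "Kcount (Suc (2 * u)) = Kcount u + of_bool (2 \<le> b)"
proof -
  have "Kcount (Suc (2 * u)) =
      card {(a, c) \<in> map_prod Suc Suc ` inner_zero_blocks u. 2 \<le> c - a + 1} + of_bool (2 \<le> b - 1 + 1)"
    unfolding Kcount_def inner_zero_blocks_Suc_double_even[OF assms]
    by (rule card_filter_insert) (use inner_zero_blocks_fst_le_snd in \<open>auto simp: finite_inner_zero_blocks\<close>)
  also have "card {(a, c) \<in> map_prod Suc Suc ` inner_zero_blocks u. 2 \<le> c - a + 1} = Kcount u"
    unfolding Kcount_def by (rule card_filter_image_map_prod_Suc) simp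
  finally show ?thesis
    using assms(3) by simp
qed

lemma one_blocks_zero: "one_blocks 0 = {}"
  by (auto simp: one_blocks_def)

lemma Kcount_one: "Kcount 1 = 0"
proof -
  have "inner_zero_blocks 1 = {}"
    using bit_imp_less[of 1] by (fastforce simp: inner_zero_blocks_def)
  then show ?thesis
    by (simp add: Kcount_def)
qed

lemma Lcount_one: "1 \<le> k \<Longrightarrow> Lcount k 1 = 1"
  using Lcount_Suc_double_even[of k 0] by (simp add: Lcount_def one_blocks_zero)

section \<open>The invariant\<close>

(* The invariant D_invariant k c t, kept while t is built digit by digit, comes in three cases
   according to whether t ends in 1, 10 or 00; in the first case l is the length of the lowest
   block of ones. *)
definition bound_odd :: "nat \<Rightarrow> real \<Rightarrow> nat \<Rightarrow> bool" where
  "bound_odd k c t \<longleftrightarrow> (\<exists>l\<ge>1. (0, l - 1) \<in> one_blocks t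
     \<and> real l * (2 - kappa2_gap t) / 2 \<le> D_gain t \<and> 2 / 2 ^ l \<le> 2 - kappa2_gap t
     \<and> 4 + real (Kcount t) + c * (real (Lcount k t) - real (Kcount t) - of_bool (l \<le> k)) \<le> Dfun (Suc t))"

definition bound_10 :: "nat \<Rightarrow> real \<Rightarrow> nat \<Rightarrow> bool" where
  "bound_10 k c t \<longleftrightarrow> \<not> bit t 0 \<and> bit t 1 \<and> kappa2_gap t \<le> 0
     \<and> 4 + real (Kcount t) + c * (real (Lcount k t) - real (Kcount t)) \<le> Dfun (Suc t)
     \<and> 5 + real (Kcount t) + c * (real (Lcount k t) - real (Kcount t) - 1) \<le> Dfun (Suc t) + D_gain t"

definition bound_00 :: "nat \<Rightarrow> real \<Rightarrow> nat \<Rightarrow> bool" where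
  "bound_00 k c t \<longleftrightarrow> (\<exists>b\<ge>2. (\<forall>i<b. \<not> bit t i) \<and> bit t b) \<and> kappa2_gap t \<le> 0
     \<and> 5 + real (Kcount t) + c * (real (Lcount k t) - real (Kcount t) - 1) \<le> Dfun (Suc t)"

definition D_invariant :: "nat \<Rightarrow> real \<Rightarrow> nat \<Rightarrow> bool" where
  "D_invariant k c t \<longleftrightarrow> - 2 < kappa2_gap t \<and> kappa2_gap t < 2 \<and> 0 < D_gain t
     \<and> 4 + real (Kcount t) + c * (real (Lcount k t) - real (Kcount t) - 1) \<le> Dfun t
     \<and> (bound_odd k c t \<or> bound_10 k c t \<or> bound_00 k c t)"

lemma D_invariant_one:
  assumes "1 \<le> k"
  shows "D_invariant k c 1"
proof -
  have "(0, 0) \<in> one_blocks 1"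
    using mem_one_blocks_Suc_double_0(1)[of 0] by simp
  then have "bound_odd k c 1"
    unfolding bound_odd_def
    using assms Dfun_two kappa2_gap_one D_gain_one Kcount_one Lcount_one
    by (intro exI[of _ 1]) (simp add: numeral_2_eq_2)
  then show ?thesis
    unfolding D_invariant_def
    using assms Dfun_one kappa2_gap_one D_gain_one Kcount_one Lcount_one by simp
qed

lemma Dfun_Suc_Suc_double: "Dfun (Suc (Suc (2 * u))) = Dfun (Suc u)"
  using Dfun_double[of "Suc u"] by simp

lemma bound_10_double:
  assumes "0 \<le> c" and c_le: "\<And>l. 1 \<le> l \<Longrightarrow> l \<le> k \<Longrightarrow> c \<le> real l / 2 ^ l"
    and "kappa2_gap u < 2" "0 < D_gain u" "bound_odd k c u"
  shows "bound_10 k c (2 * u)"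
proof -
  define K where "K = real (Kcount u)"
  define L where "L = real (Lcount k u)"
  define w where "w = kappa2_gap u"
  define e where "e = D_gain u"
  define y where "y = Dfun (Suc u)"
  obtain l where l: "1 \<le> l" "(0, l - 1) \<in> one_blocks u" "real l * (2 - w) / 2 \<le> e"
      "2 / 2 ^ l \<le> 2 - w" "4 + K + c * (L - K - of_bool (l \<le> k)) \<le> y"
    using assms(5) by (auto simp: bound_odd_def K_def L_def w_def e_def y_def)
  \<comment> \<open>the only place where the hypothesis on c is needed\<close>
  have "c * of_bool (l \<le> k) \<le> e"
  proof (cases "l \<le> k")
    case True
    have "c \<le> real l * (2 / 2 ^ l) / 2"
      using c_le[OF l(1) True] by simp
    also have "\<dots> \<le> real l * (2 - w) / 2"
      using l(4) by (intro divide_right_mono mult_left_mono) simp_all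
    finally show ?thesis
      using True l(3) by simp
  qed (use assms(4) in \<open>simp add: e_def\<close>)
  moreover have "c * (L - K - of_bool (l \<le> k)) = c * (L - K) - c * of_bool (l \<le> k)"
    by (simp add: algebra_simps)
  ultimately have "4 + K + c * (L - K) \<le> y + e"
    using l(5) by linarith
  moreover have "c * (L - K - 1) \<le> c * (L - K - of_bool (l \<le> k))"
    using assms(1) by (intro mult_left_mono) auto
  moreover have "2 - w \<le> real l * (2 - w)"
    using l(1) assms(3) by (simp add: w_def)
  then have "5 + K + c * (L - K - 1) \<le> y + e + (e / 2 + (2 + w) / 4)"
    using l(3,5) assms(3) \<open>c * (L - K - 1) \<le> c * (L - K - of_bool (l \<le> k))\<close>
    by (simp only: add_divide_distrib w_def)
  moreover have "odd u"
    using bit_one_blocks[OF l(2), of 0] by (simp add: bit_0)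
  then have "\<not> bit (2 * u) 0" "bit (2 * u) 1"
    using bit_double_nat(1)[of u] bit_double_nat(2)[of u 0] by (simp_all add: bit_0)
  ultimately show ?thesis
    using assms(3)
    by (simp add: bound_10_def K_def L_def w_def e_def y_def Kcount_double Lcount_double Dfun_Suc_double
        kappa2_gap_double D_gain_double)
qed

lemma bound_00_double:
  assumes "kappa2_gap u < 2" "0 < D_gain u" "bound_10 k c u \<or> bound_00 k c u"
  shows "bound_00 k c (2 * u)"
proof -
  have new: "kappa2_gap (2 * u) \<le> 0" "Dfun (Suc (2 * u)) = Dfun (Suc u) + D_gain u"
      "real (Kcount (2 * u)) = real (Kcount u)" "real (Lcount k (2 * u)) = real (Lcount k u)"
    using assms(1) by (simp_all add: kappa2_gap_double Dfun_Suc_double Kcount_double Lcount_double)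
  from assms(3) show ?thesis
  proof
    assume "bound_10 k c u"
    then show ?thesis
      unfolding bound_10_def bound_00_def new
      using bit_double_nat(2)[of u 1, unfolded Suc_1] new(1)
      by (intro conjI exI[of _ 2]) (auto simp: less_2_cases_iff bit_double_nat)
  next
    assume "bound_00 k c u"
    then obtain b where "2 \<le> b" "\<forall>i<b. \<not> bit u i" "bit u b"
        "5 + real (Kcount u) + c * (real (Lcount k u) - real (Kcount u) - 1) \<le> Dfun (Suc u)"
      by (auto simp: bound_00_def)
    then show ?thesis
      unfolding bound_00_def new using assms(2) new(1)
      by (intro conjI exI[of _ "Suc b"]) (auto simp: bit_double_nat less_Suc_eq_0_disj)
  qed
qed

lemma D_invariant_double:
  assumes "0 \<le> c" "\<And>l. 1 \<le> l \<Longrightarrow> l \<le> k \<Longrightarrow> c \<le> real l / 2 ^ l" and inv: "D_invariant k c u"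
  shows "D_invariant k c (2 * u)"
proof -
  have w: "- 2 < kappa2_gap u" "kappa2_gap u < 2" and e: "0 < D_gain u"
    using inv by (auto simp: D_invariant_def)
  have "bound_10 k c (2 * u) \<or> bound_00 k c (2 * u)"
    using inv bound_10_double[OF assms(1,2) w(2) e] bound_00_double[OF w(2) e]
    unfolding D_invariant_def by blast
  with inv w e show ?thesis
    unfolding D_invariant_def Kcount_double Lcount_double Dfun_double kappa2_gap_double D_gain_double
    by (simp add: add_divide_distrib)
qed

lemma Dfun_Suc_lower_bound:
  assumes "0 \<le> c" "bound_odd k c t \<or> bound_10 k c t \<or> bound_00 k c t"
  shows "4 + real (Kcount t) + c * (real (Lcount k t) - real (Kcount t) - 1) \<le> Dfun (Suc t)"
proof -
  define K where "K = real (Kcount t)"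
  define L where "L = real (Lcount k t)"
  have le: "c * (L - K - 1) \<le> c * (L - K - s)" if "s \<le> 1" for s
    using assms(1) that by (intro mult_left_mono) auto
  from assms(2) consider "bound_odd k c t" | "bound_10 k c t" | "bound_00 k c t"
    by blast
  then show ?thesis
  proof cases
    case 1
    then obtain l where "4 + K + c * (L - K - of_bool (l \<le> k)) \<le> Dfun (Suc t)"
      by (auto simp: bound_odd_def K_def L_def)
    with le[of "of_bool (l \<le> k)"] show ?thesis
      by (simp add: K_def L_def)
  next
    case 2
    with le[of 0] show ?thesis
      by (simp add: bound_10_def K_def L_def)
  next
    case 3
    then show ?thesis
      by (simp add: bound_00_def)
  qed
qed

lemma bound_odd_Suc_double:
  assumes "bound_odd k c u"
  shows "bound_odd k c (Suc (2 * u))"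
proof -
  define K where "K = real (Kcount u)"
  define L where "L = real (Lcount k u)"
  define w where "w = kappa2_gap u"
  define e where "e = D_gain u"
  obtain l where l: "1 \<le> l" "(0, l - 1) \<in> one_blocks u" "real l * (2 - w) / 2 \<le> e"
      "2 / 2 ^ l \<le> 2 - w" "4 + K + c * (L - K - of_bool (l \<le> k)) \<le> Dfun (Suc u)"
    using assms by (auto simp: bound_odd_def K_def L_def w_def e_def)
  have "odd u"
    using bit_one_blocks[OF l(2), of 0] by (simp add: bit_0)
  then have K': "real (Kcount (Suc (2 * u))) = K"
    by (simp add: K_def Kcount_Suc_double_odd)
  have "real (Lcount k (Suc (2 * u))) + of_bool (l \<le> k) = L + of_bool (Suc l \<le> k)"
    using arg_cong[OF Lcount_Suc_double_odd[OF l(2), of k], of real] l(1) by (simp add: L_def)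
  then have L': "real (Lcount k (Suc (2 * u))) - K - of_bool (Suc l \<le> k) = L - K - of_bool (l \<le> k)"
    by linarith
  have "(0, Suc l - 1) \<in> one_blocks (Suc (2 * u))"
    using mem_one_blocks_Suc_double_0(2)[of "l - 1" u] l(1,2) by simp
  moreover have "real (Suc l) * (2 - kappa2_gap (Suc (2 * u))) / 2 \<le> D_gain (Suc (2 * u))"
    unfolding kappa2_gap_Suc_double D_gain_Suc_double using l(3) by (simp add: w_def e_def field_simps)
  moreover have "2 / 2 ^ Suc l \<le> 2 - kappa2_gap (Suc (2 * u))"
    unfolding kappa2_gap_Suc_double using l(4) by (simp add: w_def field_simps)
  moreover have "4 + real (Kcount (Suc (2 * u))) + c * (real (Lcount k (Suc (2 * u)))
      - real (Kcount (Suc (2 * u))) - of_bool (Suc l \<le> k)) \<le> Dfun (Suc (Suc (2 * u)))"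
    unfolding K' L' Dfun_Suc_Suc_double using l(5) .
  ultimately show ?thesis
    unfolding bound_odd_def by (intro exI[of _ "Suc l"]) simp
qed

lemma bound_odd_Suc_double_even:
  assumes "1 \<le> k" "0 < D_gain u" "bound_10 k c u \<or> bound_00 k c u"
  shows "bound_odd k c (Suc (2 * u))"
proof -
  define K where "K = real (Kcount (Suc (2 * u)))"
  define L where "L = real (Lcount k u)"
  have "\<not> bit u 0 \<and> kappa2_gap u \<le> 0 \<and> 4 + K + c * (L - K) \<le> Dfun (Suc u)"
    using assms(3)
  proof
    assume "bound_10 k c u"
    moreover from this have "K = real (Kcount u)"
      using Kcount_Suc_double_even[of 1 u] by (simp add: bound_10_def K_def)
    ultimately show ?thesis
      by (simp add: bound_10_def L_def)
  next
    assume "bound_00 k c u"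
    then obtain b where b: "2 \<le> b" "\<forall>i<b. \<not> bit u i" "bit u b" and "kappa2_gap u \<le> 0"
        "5 + real (Kcount u) + c * (L - real (Kcount u) - 1) \<le> Dfun (Suc u)"
      by (auto simp: bound_00_def L_def)
    moreover have "K = real (Kcount u) + 1"
      using Kcount_Suc_double_even[OF b(2,3)] b(1) by (simp add: K_def)
    ultimately show ?thesis
      by (simp add: algebra_simps)
  qed
  then have "\<not> bit u 0" "kappa2_gap u \<le> 0" and bound: "4 + K + c * (L - K) \<le> Dfun (Suc u)"
    by simp_all
  have "even u"
    using \<open>\<not> bit u 0\<close> by (simp add: bit_0)
  then have "real (Lcount k (Suc (2 * u))) = L + 1"
    using Lcount_Suc_double_even[OF assms(1)] by (simp add: L_def)
  moreover have "(0, 1 - 1) \<in> one_blocks (Suc (2 * u))"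
    using mem_one_blocks_Suc_double_0(1) \<open>\<not> bit u 0\<close> by simp
  ultimately show ?thesis
    unfolding bound_odd_def K_def[symmetric] Dfun_Suc_Suc_double
    using assms(1,2) \<open>kappa2_gap u \<le> 0\<close> bound
    by (intro exI[of _ 1]) (simp add: kappa2_gap_Suc_double D_gain_Suc_double add_divide_distrib diff_divide_distrib)
qed

lemma D_invariant_Suc_double:
  assumes "1 \<le> k" "0 \<le> c" and inv: "D_invariant k c u"
  shows "D_invariant k c (Suc (2 * u))"
proof -
  have w: "- 2 < kappa2_gap u" "kappa2_gap u < 2" and e: "0 < D_gain u"
    using inv by (auto simp: D_invariant_def)
  have odd: "bound_odd k c (Suc (2 * u))"
    using inv bound_odd_Suc_double bound_odd_Suc_double_even[OF assms(1) e] unfolding D_invariant_def by blast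
  then have "4 + real (Kcount (Suc (2 * u)))
      + c * (real (Lcount k (Suc (2 * u))) - real (Kcount (Suc (2 * u))) - 1) \<le> Dfun (Suc (Suc (2 * u)))"
    using Dfun_Suc_lower_bound[OF assms(2)] by blast
  moreover have "Dfun (Suc (Suc (2 * u))) \<le> Dfun (Suc (2 * u))"
    using e by (simp add: Dfun_Suc_double Dfun_Suc_Suc_double)
  ultimately show ?thesis
    unfolding D_invariant_def kappa2_gap_Suc_double D_gain_Suc_double
    using w e odd by (simp add: add_divide_distrib diff_divide_distrib)
qed

lemma D_invariant_all:
  assumes "1 \<le> k" "0 \<le> c" "\<And>l. 1 \<le> l \<Longrightarrow> l \<le> k \<Longrightarrow> c \<le> real l / 2 ^ l" and "1 \<le> t"
  shows "D_invariant k c t"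
  using assms(4)
proof (induction t rule: binary_induct)
  case one
  then show ?case using D_invariant_one[OF assms(1)] by simp
next
  case (double u)
  then show ?case using D_invariant_double[OF assms(2,3)] by simp
next
  case (Suc_double u)
  then show ?case using D_invariant_Suc_double[OF assms(1,2)] by simp
qed simp

lemma mfun_lower_bound:
  assumes "1 \<le> k" "0 \<le> c" "\<And>l. 1 \<le> l \<Longrightarrow> l \<le> k \<Longrightarrow> c \<le> real l / 2 ^ l" and "1 \<le> t"
  shows "4 + real (Kcount t) + c * (real (Lcount k t) - real (Kcount t) - 1) \<le> mfun t"
proof -
  have inv: "D_invariant k c t"
    using D_invariant_all[OF assms] .
  then have "4 + real (Kcount t) + c * (real (Lcount k t) - real (Kcount t) - 1) \<le> Dfun (Suc t)"
    using Dfun_Suc_lower_bound[OF assms(2)] unfolding D_invariant_def by blast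
  with inv show ?thesis
    unfolding mfun_def D_invariant_def by simp
qed

lemma real_div_power2_antimono:
  assumes "1 \<le> l" "l \<le> k"
  shows "real k / 2 ^ k \<le> real l / 2 ^ l"
  using assms(2)
proof (induction k rule: dec_induct)
  case (step n)
  have "real (Suc n) / 2 ^ Suc n \<le> 2 * real n / 2 ^ Suc n"
    using assms(1) step(1) by (intro divide_right_mono) auto
  with step show ?case
    by simp
qed simp

lemma mfun_ge_block_counts:
  assumes "1 \<le> k" "1 \<le> t"
  shows "4 + real (Kcount t)
           + real_of_int (max 0 \<lfloor>(real (Lcount k t) - 2 * real (Kcount t) - 1) / 2\<rfloor>) * (real k / 2 ^ k)
         \<le> mfun t"
proof -
  define K where "K = real (Kcount t)"
  define L where "L = real (Lcount k t)"
  define F where "F = \<lfloor>(L - 2 * K - 1) / 2\<rfloor>"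
  have "4 + K \<le> mfun t"
    using mfun_lower_bound[OF assms(1) order.refl _ assms(2)] by (simp add: K_def)
  moreover have "4 + K + F * (real k / 2 ^ k) \<le> mfun t" if "1 \<le> F"
  proof -
    have "real_of_int F \<le> (L - 2 * K - 1) / 2"
      unfolding F_def by (rule of_int_floor_le)
    with that have "real_of_int F \<le> L - K - 1"
      by (simp add: K_def field_simps)
    then have "F * (real k / 2 ^ k) \<le> real k / 2 ^ k * (L - K - 1)"
      using mult_right_mono[of "real_of_int F" "L - K - 1" "real k / 2 ^ k"] by (simp add: mult.commute)
    moreover have "4 + K + real k / 2 ^ k * (L - K - 1) \<le> mfun t"
      using mfun_lower_bound[OF assms(1) _ real_div_power2_antimono assms(2)] by (simp add: K_def L_def)
    ultimately show ?thesis
      by linarith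
  qed
  ultimately show ?thesis
    unfolding K_def[symmetric] L_def[symmetric] F_def[symmetric] by (cases "1 \<le> F") auto
qed

lemma block_counts_bounded:
  fixes D0 :: real
  assumes "1 \<le> k"
  shows "\<exists>B::nat. \<forall>t. 1 \<le> t \<and> Dfun t \<le> D0 \<longrightarrow> Kcount t \<le> B \<and> Lcount k t \<le> B"
proof (intro exI allI impI)
  fix t assume t: "1 \<le> t \<and> Dfun t \<le> D0"
  define c :: real where "c = real k / 2 ^ k"
  have "c > 0"
    using assms by (simp add: c_def)
  have D: "mfun t \<le> D0"
    using t by (simp add: mfun_def min_le_iff_disj)
  have K: "4 + real (Kcount t) \<le> D0"
    using mfun_lower_bound[OF assms order.refl _ conjunct1[OF t]] D by simp
  have "c * (real (Lcount k t) - real (Kcount t) - 1) \<le> D0"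
    using mfun_lower_bound[OF assms _ _ conjunct1[OF t], of c] \<open>c > 0\<close> D K
      real_div_power2_antimono[of _ k] by (simp add: c_def)
  then have "real (Lcount k t) - real (Kcount t) - 1 \<le> D0 * 2 ^ k / real k"
    using \<open>c > 0\<close> by (simp add: c_def field_simps)
  also have "\<dots> \<le> D0 * 2 ^ k"
    using divide_left_mono[of 1 "real k" "D0 * 2 ^ k"] assms K by simp
  finally have "real (Lcount k t) \<le> D0 + D0 * 2 ^ k + 1"
    using K by linarith
  moreover have "0 \<le> D0 * 2 ^ k"
    using K by simp
  with K have "real (Kcount t) \<le> D0 + D0 * 2 ^ k + 1"
    by linarith
  moreover have "n \<le> nat \<lceil>x\<rceil>" if "real n \<le> x" for n x
    using nat_mono[OF ceiling_mono[OF that]] by simp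
  ultimately show "Kcount t \<le> nat \<lceil>D0 + D0 * 2 ^ k + 1\<rceil> \<and> Lcount k t \<le> nat \<lceil>D0 + D0 * 2 ^ k + 1\<rceil>"
    by blast
qed

theorem corollary2p13:
  fixes k t :: nat
  assumes "k \<ge> 2" and "t \<ge> 1"
  shows "(mfun t \<ge> 4 + real (Kcount t)
           + real_of_int (max 0 \<lfloor>(real (Lcount k t) - 2 * real (Kcount t) - 1) / 2\<rfloor>)
             * (real k / 2 ^ k))
    \<and> (\<forall>D0::int. \<forall>k'::nat. D0 \<ge> 2 \<and> k' \<ge> 2 \<longrightarrow>
           (\<exists>B::nat. \<forall>t'::nat. t' \<ge> 1 \<and> Dfun t' \<le> real_of_int D0 \<longrightarrow>
              Kcount t' \<le> B \<and> Lcount k' t' \<le> B))"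
  using mfun_ge_block_counts[of k t] block_counts_bounded assms by auto

end
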